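(* Let $\mathcal{N}=\{1,\dots,N\}$ be a set of $N$ files with popularity distribution $p_1,\dots,p_N$, let there be $K$ users each with normalized cache size $M\ge 0$, and let $\mathcal{N}_1,\dots,\mathcal{N}_L$ be any partition of $\mathcal{N}$, with $N_\ell=|\mathcal{N}_\ell|$. For each $\ell$, let $\mathsf{K}_\ell$ be the (random) number of users whose demand lies in $\mathcal{N}_\ell$. Then \[ R^\star(M,\mathcal{N},K)\;\le\;\min_{\{M_\ell\}:\,M_\ell\ge 0,\ \sum_{\ell} M_\ell=M}\ \sum_{\ell=1}^L \mathbb{E}\bigl(R(M_\ell,N_\ell,\mathsf{K}_\ell)\bigr)\;\le\;\sum_{\ell=1}^L \mathbb{E}\bigl(R(M/L,N_\ell,\mathsf{K}_\ell)\bigr), \] where the expectations are over the random demands.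
   Context: Caching problem: a server holds $N$ files, each of $F$ bits, and is connected through a shared error-free link to $K$ users, each with a cache of $MF$ bits. In the placement phase (before demands are known), each user stores an arbitrary function of the $N$ files of at most $MF$ bits. In the delivery phase, each user $k$ independently requests a file $\mathsf{d}_k$, where $\Pr(\mathsf{d}_k=n)=p_n$; the server, knowing the demands, sends a message over the shared link, and each user must reconstruct its requested file from this message and its cache. The rate of a scheme for a demand vector is the message length divided by $F$; the expected rate is its expectation over the demands. The optimal expected rate $R^\star(M,\mathcal{N},K)$ is the infimum of expected rates achievable (with vanishing error probability, for all sufficiently large $F$) over all placement and delivery schemes. Thus $\mathsf{K}_\ell$ is Binomial$(K,\sum_{n\in\mathcal{N}_\ell}p_n)$. The function $R$ is defined for real $M\ge 0$ and integers $N\ge1$, $K\ge 0$ by $R(M,N,K)=(1-M/N)\min\{\tfrac{N}{M}(1-(1-M/N)^K),\,N\}$ for $M\in(0,N]$ (equivalently $K(1-M/N)\min\{\frac{N}{KM}(1-(1-M/N)^K),\frac{N}{K}\}$ when $K\ge1$), $R(0,N,K)=\min\{N,K\}$, and $R(M,N,K)=0$ for $M>N$. *)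

theory Defs
  imports Complex_Main "HOL-Library.FuncSet"
begin

text \<open>Files are indexed by 0..N-1, users by 0..K-1. A file is a bit string (bool list).\<close>

definition file_tuples :: "nat \<Rightarrow> nat \<Rightarrow> (nat \<Rightarrow> bool list) set" where
  "file_tuples N F = PiE {..<N} (\<lambda>_. {xs. length xs = F})"

definition demand_vectors :: "nat \<Rightarrow> nat \<Rightarrow> (nat \<Rightarrow> nat) set" where
  "demand_vectors N K = PiE {..<K} (\<lambda>_. {..<N})"

definition demand_prob :: "(nat \<Rightarrow> real) \<Rightarrow> nat \<Rightarrow> (nat \<Rightarrow> nat) \<Rightarrow> real" where
  "demand_prob p K d = (\<Prod>k<K. p (d k))"

text \<open>A caching scheme: placement (cache content of user k as function of the files),
  delivery encoder (message as function of demand vector and files),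
  and decoders (user k, demand vector, message, own cache content \<mapsto> estimate of its file).\<close>
record scheme =
  cache :: "nat \<Rightarrow> (nat \<Rightarrow> bool list) \<Rightarrow> bool list"
  enc   :: "(nat \<Rightarrow> nat) \<Rightarrow> (nat \<Rightarrow> bool list) \<Rightarrow> bool list"
  dec   :: "nat \<Rightarrow> (nat \<Rightarrow> nat) \<Rightarrow> bool list \<Rightarrow> bool list \<Rightarrow> bool list"

definition cache_ok :: "real \<Rightarrow> nat \<Rightarrow> nat \<Rightarrow> nat \<Rightarrow> scheme \<Rightarrow> bool" where
  "cache_ok M N K F S \<longleftrightarrow>
     (\<forall>k<K. \<forall>W\<in>file_tuples N F. real (length (cache S k W)) \<le> M * real F)"

definition msg_len :: "nat \<Rightarrow> nat \<Rightarrow> scheme \<Rightarrow> (nat \<Rightarrow> nat) \<Rightarrow> nat" where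
  "msg_len N F S d = Max ((\<lambda>W. length (enc S d W)) ` file_tuples N F)"

text \<open>Error probability for demand d, files independent and uniformly distributed.\<close>
definition err_prob :: "nat \<Rightarrow> nat \<Rightarrow> nat \<Rightarrow> scheme \<Rightarrow> (nat \<Rightarrow> nat) \<Rightarrow> real" where
  "err_prob N K F S d =
     real (card {W \<in> file_tuples N F.
                 \<exists>k<K. dec S k d (enc S d W) (cache S k W) \<noteq> W (d k)})
     / real (card (file_tuples N F))"

definition expected_rate :: "(nat \<Rightarrow> real) \<Rightarrow> nat \<Rightarrow> nat \<Rightarrow> nat \<Rightarrow> scheme \<Rightarrow> real" where
  "expected_rate p N K F S =
     (\<Sum>d\<in>demand_vectors N K. demand_prob p K d * (real (msg_len N F S d) / real F))"

definition achievable :: "(nat \<Rightarrow> real) \<Rightarrow> real \<Rightarrow> nat \<Rightarrow> nat \<Rightarrow> real \<Rightarrow> bool" where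
  "achievable p M N K r \<longleftrightarrow>
     (\<forall>\<epsilon>>0. \<exists>F0. \<forall>F\<ge>F0. \<exists>S. cache_ok M N K F S
         \<and> (\<forall>d\<in>demand_vectors N K. err_prob N K F S d \<le> \<epsilon>)
         \<and> expected_rate p N K F S \<le> r + \<epsilon>)"

definition R_star :: "(nat \<Rightarrow> real) \<Rightarrow> real \<Rightarrow> nat \<Rightarrow> nat \<Rightarrow> real" where
  "R_star p M N K = Inf {r. achievable p M N K r}"

definition Rfun :: "real \<Rightarrow> nat \<Rightarrow> nat \<Rightarrow> real" where
  "Rfun M N K =
     (if M = 0 then real (min N K)
      else if M > real N then 0
      else (1 - M / real N) * min ((real N / M) * (1 - (1 - M / real N) ^ K)) (real N))"

definition exp_R_class :: "(nat \<Rightarrow> real) \<Rightarrow> nat \<Rightarrow> nat \<Rightarrow> nat set \<Rightarrow> real \<Rightarrow> real" where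
  "exp_R_class p N K A Ml =
     (\<Sum>d\<in>demand_vectors N K.
        demand_prob p K d * Rfun Ml (card A) (card {k\<in>{..<K}. d k \<in> A}))"

end

theory Submission
  imports Defs
begin

text \<open>
  Fix any split \<open>M = \<Sum>\<^sub>l M\<^sub>l\<close> of the cache and treat every class \<open>l\<close> by the decentralised coded
  caching scheme with cache \<open>M\<^sub>l\<close>.  With \<open>q = min (M\<^sub>l/N\<^sub>l) 1\<close>, each file of the class is split
  into parts indexed by the sets \<open>T\<close> of users, of about \<open>q\<^bsup>|T|\<^esup>(1 - q)\<^bsup>K-|T|\<^esup> F\<close> bits, and
  user \<open>k\<close> caches the parts with \<open>k \<in> T\<close>: about \<open>q N\<^sub>l F \<le> M\<^sub>l F\<close> bits.  If \<open>S\<close> is the set of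
  users requesting a file of the class, the server either resends the requested files, at cost
  \<open>N\<^sub>l (1 - q) F\<close>, or serves every set \<open>V\<close> meeting \<open>S\<close> at once, at cost
  \<open>\<Sum>\<^sub>V q\<^bsup>|V|-1\<^esup>(1 - q)\<^bsup>K-|V|+1\<^esup> F = (1 - q)(1 - (1 - q)\<^bsup>|S|\<^esup>)/q F\<close>; the cheaper option costs
  \<open>R(M\<^sub>l, N\<^sub>l, |S|) F\<close> up to an additive constant independent of \<open>F\<close>.  Instead of XORs, the message
  for a block is a colour of the graph of file tuples that some user of the block could confuse
  given its cache; a view is confusable with at most \<open>K 2\<^bsup>w\<^esup>\<close> others when each user misses
  at most \<open>w\<close> bits, so \<open>w + K + 1\<close> bits of colour suffice.  Averaging over the demands and letting \<open>F \<rightarrow> \<infinity>\<close> shows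
  that \<open>\<Sum>\<^sub>l E R(M\<^sub>l, N\<^sub>l, K\<^sub>l)\<close> is achievable; the equal split \<open>M\<^sub>l = M/L\<close> gives the second bound.
\<close>

section \<open>Separating encodings\<close>

definition enumeration :: "'a set \<Rightarrow> 'a list" where
  "enumeration A = (SOME xs. distinct xs \<and> set xs = A)"

lemma enumeration: "finite A \<Longrightarrow> distinct (enumeration A) \<and> set (enumeration A) = A"
  unfolding enumeration_def by (rule someI_ex) (use finite_distinct_list in blast)

definition tabulate :: "('a \<Rightarrow> 'b) \<Rightarrow> 'a set \<Rightarrow> 'b list" where
  "tabulate f A = map f (enumeration A)"

lemma length_tabulate: "finite A \<Longrightarrow> length (tabulate f A) = card A"
  unfolding tabulate_def using enumeration[of A] by (metis distinct_card length_map)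

lemma tabulate_eq_iff: "finite A \<Longrightarrow> tabulate f A = tabulate g A \<longleftrightarrow> (\<forall>a\<in>A. f a = g a)"
  unfolding tabulate_def using enumeration[of A] by (simp add: map_eq_conv)

lemma finite_bool_lists: "finite {xs :: bool list. length xs = n}"
  using finite_lists_length_eq[of "UNIV :: bool set" n] by simp

lemma card_bool_lists: "card {xs :: bool list. length xs = n} = 2 ^ n"
  using card_lists_length_eq[of "UNIV :: bool set" n] by simp

lemma card_le_pow_if_inj_on_bool_lists:
  assumes "inj_on \<phi> A" and "\<phi> ` A \<subseteq> {xs :: bool list. length xs = n}"
  shows "card A \<le> 2 ^ n"
proof -
  have "card A = card (\<phi> ` A)" using card_image[OF assms(1)] by simp
  also have "\<dots> \<le> 2 ^ n"
    using card_mono[OF finite_bool_lists assms(2)] by (simp add: card_bool_lists)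
  finally show ?thesis .
qed

lemma card_Pow_lessThan: "card (Pow {..<K::nat}) = 2 ^ K"
  by (simp add: card_Pow)

lemma real_card_le_two_pow: "A \<subseteq> Pow {..<K::nat} \<Longrightarrow> real (card A) \<le> 2 ^ K"
  using card_mono[of "Pow {..<K}" A] card_Pow_lessThan[of K]
  by (metis finite_Pow_iff finite_lessThan of_nat_le_iff of_nat_numeral of_nat_power)

lemma nat_eq_if_low_bits_eq:
  fixes a b :: nat
  assumes "a < 2 ^ w" "b < 2 ^ w" "\<forall>j<w. bit a j = bit b j"
  shows "a = b"
proof -
  have "take_bit w a = a" "take_bit w b = b" using assms by (auto simp: take_bit_nat_eq_self_iff)
  then show ?thesis using assms(3) by (metis bit_eq_iff bit_take_bit_iff)
qed

lemma bounded_degree_coloring: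
  fixes Y :: "'y set"
  assumes "finite Y" and sym: "\<And>y y'. R y y' \<Longrightarrow> R y' y" and irrefl: "\<And>y. \<not> R y y"
    and "\<forall>y\<in>Y. card {y'\<in>Y. R y y'} < m"
  shows "\<exists>c. (\<forall>y\<in>Y. c y < m) \<and> (\<forall>y\<in>Y. \<forall>y'\<in>Y. R y y' \<longrightarrow> c y \<noteq> c y')"
  using assms(1,4)
proof (induction Y rule: finite_induct)
  case empty
  then show ?case by auto
next
  case (insert a Y)
  have "card {y'\<in>Y. R y y'} \<le> card {y'\<in>insert a Y. R y y'}" for y
    by (rule card_mono) (use insert in auto)
  then have "\<forall>y\<in>Y. card {y'\<in>Y. R y y'} < m" using insert(4) by (meson insertCI le_less_trans)
  then obtain c where c: "\<forall>y\<in>Y. c y < m" "\<forall>y\<in>Y. \<forall>y'\<in>Y. R y y' \<longrightarrow> c y \<noteq> c y'"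
    using insert by blast
  define nbrs where "nbrs = {y'\<in>Y. R a y'}"
  have "card nbrs \<le> card {y'\<in>insert a Y. R a y'}"
    unfolding nbrs_def by (rule card_mono) (use insert in auto)
  then have "card (c ` nbrs) < card {..<m}"
    using card_image_le[of nbrs c] insert unfolding nbrs_def by fastforce
  then have "\<not> {..<m} \<subseteq> c ` nbrs"
    using card_mono[of "c ` nbrs" "{..<m}"] insert(1) unfolding nbrs_def by auto
  then obtain col where col: "col < m" "col \<notin> c ` nbrs" by auto
  have "(c(a := col)) y \<noteq> (c(a := col)) y'"
    if "y \<in> insert a Y" "y' \<in> insert a Y" "R y y'" for y y'
    using that c col irrefl sym[OF \<open>R y y'\<close>] unfolding nbrs_def by (cases "y = a"; cases "y' = a") auto
  then show ?case using c col by (intro exI[of _ "c(a := col)"]) auto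
qed

text \<open>This replaces the XORs of coded delivery: block \<open>b\<close> only has to distinguish values
  \<open>pr b x\<close> that some user could confuse (relation \<open>R b\<close>), and a proper colouring of this
  confusability graph, written with \<open>w b\<close> bits, does so.\<close>
lemma separating_encoding_exists:
  fixes X :: "'x set" and B :: "'b set" and pr :: "'b \<Rightarrow> 'x \<Rightarrow> 'y"
  assumes "finite X" "finite B"
    and sym: "\<And>b y y'. b \<in> B \<Longrightarrow> R b y y' \<Longrightarrow> R b y' y"
    and irrefl: "\<And>b y. b \<in> B \<Longrightarrow> \<not> R b y y"
    and degree: "\<And>b y. b \<in> B \<Longrightarrow> y \<in> pr b ` X \<Longrightarrow> card {y'\<in>pr b ` X. R b y y'} < 2 ^ w b"
  shows "\<exists>E::'x \<Rightarrow> bool list. (\<forall>x\<in>X. length (E x) = (\<Sum>b\<in>B. w b)) \<and>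
             (\<forall>x\<in>X. \<forall>x'\<in>X. E x = E x' \<longrightarrow> (\<forall>b\<in>B. \<not> R b (pr b x) (pr b x')))"
proof -
  have "\<forall>b\<in>B. \<exists>c. (\<forall>y\<in>pr b ` X. (c y::nat) < 2 ^ w b) \<and>
          (\<forall>y\<in>pr b ` X. \<forall>y'\<in>pr b ` X. R b y y' \<longrightarrow> c y \<noteq> c y')"
    using assms by (intro ballI bounded_degree_coloring) auto
  then obtain c where c: "\<And>b. b \<in> B \<Longrightarrow> (\<forall>y\<in>pr b ` X. (c b y::nat) < 2 ^ w b) \<and>
          (\<forall>y\<in>pr b ` X. \<forall>y'\<in>pr b ` X. R b y y' \<longrightarrow> c b y \<noteq> c b y')"
    by metis
  define bits where "bits = Sigma B (\<lambda>b. {..<w b})"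
  define E where "E x = tabulate (\<lambda>(b,j). bit (c b (pr b x)) j) bits" for x
  have fin: "finite bits" unfolding bits_def using assms(2) by auto
  have "length (E x) = (\<Sum>b\<in>B. w b)" for x
    unfolding E_def length_tabulate[OF fin] unfolding bits_def
    by (subst card_SigmaI[OF assms(2)]) auto
  moreover have "\<not> R b (pr b x) (pr b x')"
    if x: "x \<in> X" "x' \<in> X" and eq: "E x = E x'" and b: "b \<in> B" for x x' b
  proof -
    have "\<forall>j<w b. bit (c b (pr b x)) j = bit (c b (pr b x')) j"
      using eq[unfolded E_def tabulate_eq_iff[OF fin]] b unfolding bits_def by fastforce
    then have "c b (pr b x) = c b (pr b x')"
      using c[OF b] x by (intro nat_eq_if_low_bits_eq) auto
    then show ?thesis using c[OF b] x by blast
  qed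
  ultimately show ?thesis by blast
qed

lemma card_related_lt_two_pow:
  assumes "finite S" "card S \<le> K" "{y'\<in>Y. R y'} \<subseteq> (\<Union>k\<in>S. A k)"
    and "\<And>k. k \<in> S \<Longrightarrow> finite (A k)" "\<And>k. k \<in> S \<Longrightarrow> card (A k) \<le> 2 ^ w"
  shows "card {y'\<in>Y. R y'} < 2 ^ (w + K + 1)"
proof -
  have "card {y'\<in>Y. R y'} \<le> card (\<Union>k\<in>S. A k)"
    using assms by (intro card_mono) auto
  also have "\<dots> \<le> (\<Sum>k\<in>S. card (A k))" by (rule card_UN_le[OF assms(1)])
  also have "\<dots> \<le> K * 2 ^ w"
    using sum_mono[of S "\<lambda>k. card (A k)" "\<lambda>_. 2 ^ w"] assms(2,5)
    by (simp add: order_trans)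
  also have "\<dots> < 2 ^ K * 2 ^ w" by (simp add: less_exp)
  also have "\<dots> \<le> 2 ^ (w + K + 1)" by (simp add: power_add)
  finally show ?thesis .
qed

section \<open>Splitting a file into parts indexed by sets of users\<close>

definition subset_weight :: "real \<Rightarrow> nat \<Rightarrow> nat set \<Rightarrow> real" where
  "subset_weight q K T = q ^ card T * (1 - q) ^ (K - card T)"

lemma subset_weight_prod:
  "T \<subseteq> {..<K} \<Longrightarrow> subset_weight q K T = (\<Prod>a\<in>T. q) * (\<Prod>a\<in>{..<K} - T. 1 - q)"
  unfolding subset_weight_def by (simp add: card_Diff_subset finite_subset)

lemma subset_weight_nonneg: "0 \<le> q \<Longrightarrow> q \<le> 1 \<Longrightarrow> 0 \<le> subset_weight q K T"
  unfolding subset_weight_def by simp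

lemma subset_weight_remove:
  assumes "V \<subseteq> {..<K}" "i \<in> V" "q \<noteq> 0"
  shows "subset_weight q K (V - {i}) = subset_weight q K V * (1 - q) / q"
proof -
  have "finite V" using assms(1) finite_subset by blast
  then have c: "card V = Suc (card (V - {i}))" using assms(2) by (metis card_Suc_Diff1)
  have "card V \<le> K" using card_mono[OF _ assms(1)] by simp
  then have "K - card (V - {i}) = Suc (K - card V)" using c by linarith
  then show ?thesis using c assms(3) unfolding subset_weight_def by (simp add: field_simps)
qed

lemma sum_subset_weight_disjoint:
  assumes "S \<subseteq> {..<K}"
  shows "(\<Sum>T\<in>{T\<in>Pow {..<K}. T \<inter> S = {}}. subset_weight q K T) = (1 - q) ^ card S"
proof -
  define f where "f a = (if a \<in> S then 0 else q)" for a :: nat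
  have "(\<Prod>a<K. f a + (1 - q)) = (\<Sum>T\<in>Pow {..<K}. (\<Prod>a\<in>T. f a) * (\<Prod>a\<in>{..<K} - T. 1 - q))"
    by (rule prod_add) simp
  also have "\<dots> = (\<Sum>T\<in>Pow {..<K}. if T \<inter> S = {} then subset_weight q K T else 0)"
  proof (rule sum.cong[OF refl])
    fix T assume T: "T \<in> Pow {..<K}"
    then have "finite T" by (auto intro: finite_subset)
    show "(\<Prod>a\<in>T. f a) * (\<Prod>a\<in>{..<K} - T. 1 - q) = (if T \<inter> S = {} then subset_weight q K T else 0)"
    proof (cases "T \<inter> S = {}")
      case True
      then have "(\<Prod>a\<in>T. f a) = (\<Prod>a\<in>T. q)" unfolding f_def by (intro prod.cong) auto
      then show ?thesis using True T by (simp add: subset_weight_prod)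
    qed (use \<open>finite T\<close> in \<open>auto simp: f_def\<close>)
  qed
  also have "\<dots> = (\<Sum>T\<in>{T\<in>Pow {..<K}. T \<inter> S = {}}. subset_weight q K T)"
    by (rule sum.inter_filter[symmetric]) simp
  finally have "(\<Sum>T\<in>{T\<in>Pow {..<K}. T \<inter> S = {}}. subset_weight q K T) = (\<Prod>a<K. f a + (1 - q))"
    by simp
  also have "\<dots> = (\<Prod>a\<in>S. 1 - q) * (\<Prod>a\<in>{..<K} - S. 1)"
    using prod.subset_diff[OF assms, of "\<lambda>a. f a + (1 - q)"] by (simp add: f_def mult.commute)
  finally show ?thesis by simp
qed

lemma sum_subset_weight: "(\<Sum>T\<in>Pow {..<K}. subset_weight q K T) = 1"
proof -
  have "{T\<in>Pow {..<K}. T \<inter> {} = {}} = Pow {..<K}" by auto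
  then show ?thesis using sum_subset_weight_disjoint[of "{}" K q] by simp
qed

lemma sum_subset_weight_mem:
  assumes "k < K"
  shows "(\<Sum>T\<in>{T\<in>Pow {..<K}. k \<in> T}. subset_weight q K T) = q"
proof -
  let ?A = "{T\<in>Pow {..<K}. k \<in> T}" and ?B = "{T\<in>Pow {..<K}. T \<inter> {k} = {}}"
  have "?A \<union> ?B = Pow {..<K}" by blast
  then have "1 = (\<Sum>T\<in>?A \<union> ?B. subset_weight q K T)"
    by (simp only: sum_subset_weight)
  also have "\<dots> = (\<Sum>T\<in>?A. subset_weight q K T) + (\<Sum>T\<in>?B. subset_weight q K T)"
    by (rule sum.union_disjoint) auto
  moreover have "(\<Sum>T\<in>?B. subset_weight q K T) = 1 - q"
    using sum_subset_weight_disjoint[of "{k}" K q] assms by simp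
  ultimately show ?thesis by simp
qed

lemma exists_disjoint_sets_with_cards:
  fixes a :: "'j \<Rightarrow> nat"
  assumes "finite J"
  shows "\<exists>I. (\<forall>j\<in>J. I j \<subseteq> {..<(\<Sum>j\<in>J. a j)} \<and> card (I j) = a j) \<and>
             (\<forall>i\<in>J. \<forall>j\<in>J. i \<noteq> j \<longrightarrow> I i \<inter> I j = {})"
  using assms
proof (induction J rule: finite_induct)
  case empty
  then show ?case by auto
next
  case (insert j J)
  define s where "s = (\<Sum>j\<in>J. a j)"
  obtain I where I: "\<forall>i\<in>J. I i \<subseteq> {..<s} \<and> card (I i) = a i"
    "\<forall>i\<in>J. \<forall>i'\<in>J. i \<noteq> i' \<longrightarrow> I i \<inter> I i' = {}"
    using insert unfolding s_def by blast
  define I' where "I' = I(j := {s..<s + a j})"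
  have fresh: "I' j \<inter> I' i = {}" if "i \<in> J" for i
  proof -
    have "i \<noteq> j" "I i \<subseteq> {..<s}" using that insert(2) I(1) by auto
    then show ?thesis unfolding I'_def by auto
  qed
  have "\<forall>i\<in>insert j J. I' i \<subseteq> {..<s + a j} \<and> card (I' i) = a i"
  proof
    fix i assume i: "i \<in> insert j J"
    show "I' i \<subseteq> {..<s + a j} \<and> card (I' i) = a i"
    proof (cases "i = j")
      case False
      then have "I' i = I i" "I i \<subseteq> {..<s}" "card (I i) = a i"
        using i I(1) unfolding I'_def by auto
      then show ?thesis by auto
    qed (auto simp: I'_def)
  qed
  moreover have "\<forall>i\<in>insert j J. \<forall>i'\<in>insert j J. i \<noteq> i' \<longrightarrow> I' i \<inter> I' i' = {}"
    using I(2) fresh insert(2) unfolding I'_def by (metis Int_commute fun_upd_other insert_iff)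
  moreover have "(\<Sum>j\<in>insert j J. a j) = s + a j" using insert unfolding s_def by simp
  ultimately show ?case by metis
qed

text \<open>The part of \<open>{}\<close>, which no user caches, absorbs the rounding losses.\<close>
locale subpacketization =
  fixes K F :: nat and q :: real and part :: "nat set \<Rightarrow> nat set"
  assumes fraction_nonneg: "0 \<le> q" and fraction_le_one: "q \<le> 1"
    and part_subset: "T \<subseteq> {..<K} \<Longrightarrow> part T \<subseteq> {..<F}"
    and part_disjoint: "T \<subseteq> {..<K} \<Longrightarrow> T' \<subseteq> {..<K} \<Longrightarrow> T \<noteq> T' \<Longrightarrow> part T \<inter> part T' = {}"
    and card_part: "T \<subseteq> {..<K} \<Longrightarrow> T \<noteq> {} \<Longrightarrow> card (part T) = nat \<lfloor>subset_weight q K T * F\<rfloor>"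
    and part_cover: "(\<Union>T\<in>Pow {..<K}. part T) = {..<F}"

lemma subpacketization_exists:
  assumes "0 \<le> q" "q \<le> 1"
  shows "\<exists>part. subpacketization K F q part"
proof -
  define J where "J = Pow {..<K} - {{}}"
  define a where "a T = nat \<lfloor>subset_weight q K T * F\<rfloor>" for T
  have "real (\<Sum>T\<in>J. a T) \<le> (\<Sum>T\<in>J. subset_weight q K T * F)"
    unfolding of_nat_sum a_def using subset_weight_nonneg[OF assms]
    by (intro sum_mono) (simp add: of_nat_nat)
  also have "\<dots> \<le> (\<Sum>T\<in>Pow {..<K}. subset_weight q K T * F)"
    unfolding J_def by (rule sum_mono2) (use subset_weight_nonneg[OF assms] in auto)
  also have "\<dots> = F" by (simp add: sum_distrib_right[symmetric] sum_subset_weight)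
  finally have "(\<Sum>T\<in>J. a T) \<le> F" by linarith
  moreover obtain I where I: "\<forall>T\<in>J. I T \<subseteq> {..<(\<Sum>T\<in>J. a T)} \<and> card (I T) = a T"
     "\<forall>T\<in>J. \<forall>T'\<in>J. T \<noteq> T' \<longrightarrow> I T \<inter> I T' = {}"
    using exists_disjoint_sets_with_cards[of J a] unfolding J_def by auto
  ultimately have I_subset: "T \<in> J \<Longrightarrow> I T \<subseteq> {..<F}" for T by fastforce
  define part where "part T = (if T = {} then {..<F} - (\<Union>T\<in>J. I T) else I T)" for T
  have "(\<Union>T\<in>Pow {..<K}. part T) = part {} \<union> (\<Union>T\<in>J. part T)" unfolding J_def by auto
  also have "\<dots> = {..<F}" using I_subset unfolding part_def J_def by auto
  finally have cover: "(\<Union>T\<in>Pow {..<K}. part T) = {..<F}" .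
  show ?thesis
  proof (intro exI[of _ part] subpacketization.intro)
    fix T T' assume "T \<subseteq> {..<K}" "T' \<subseteq> {..<K}" "T \<noteq> T'"
    then show "part T \<inter> part T' = {}" using I(2) unfolding part_def J_def by auto
  qed (use assms cover I(1) I_subset in \<open>auto simp: part_def J_def a_def\<close>)
qed

context subpacketization
begin

lemma finite_part: "T \<subseteq> {..<K} \<Longrightarrow> finite (part T)"
  using part_subset finite_subset by blast

lemma real_card_part_bounds:
  assumes "T \<subseteq> {..<K}" "T \<noteq> {}"
  shows "real (card (part T)) \<le> subset_weight q K T * F"
    and "subset_weight q K T * F - 1 \<le> real (card (part T))"
  using card_part[OF assms] subset_weight_nonneg[OF fraction_nonneg fraction_le_one, of K T]
  by (simp_all add: of_nat_nat)

lemma card_UN_part: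
  assumes "A \<subseteq> Pow {..<K}"
  shows "card (\<Union>T\<in>A. part T) = (\<Sum>T\<in>A. card (part T))"
proof (rule card_UN_disjoint)
  show "finite A" using assms finite_subset by blast
  show "\<forall>T\<in>A. finite (part T)" using assms finite_part by blast
  show "\<forall>T\<in>A. \<forall>T'\<in>A. T \<noteq> T' \<longrightarrow> part T \<inter> part T' = {}"
    using assms part_disjoint by (meson PowD subsetD)
qed

lemma real_card_part_le:
  assumes "T \<subseteq> {..<K}"
  shows "real (card (part T)) \<le> subset_weight q K T * F + 2 ^ K"
proof (cases "T = {}")
  case False
  have "(0::real) \<le> 2 ^ K" by simp
  then show ?thesis using real_card_part_bounds(1)[OF assms False] by linarith
next
  case True
  define J where "J = Pow {..<K} - {{}}"
  have "F = card (\<Union>T\<in>Pow {..<K}. part T)" using part_cover by simp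
  also have "\<dots> = card (part {}) + (\<Sum>T\<in>J. card (part T))"
    unfolding card_UN_part[OF order_refl] J_def by (subst sum.remove[of _ "{}"]) auto
  finally have F: "real F = card (part {}) + (\<Sum>T\<in>J. real (card (part T)))" by simp
  have "(\<Sum>T\<in>J. subset_weight q K T * F - 1) \<le> (\<Sum>T\<in>J. real (card (part T)))"
    using real_card_part_bounds(2) unfolding J_def by (intro sum_mono) auto
  moreover have "(\<Sum>T\<in>J. subset_weight q K T) = 1 - subset_weight q K {}"
    using sum_subset_weight[of q K] unfolding J_def by (subst (asm) sum.remove[of _ "{}"]) auto
  then have "(\<Sum>T\<in>J. subset_weight q K T * F - 1) = (1 - subset_weight q K {}) * F - card J"
    by (simp add: sum_subtractf sum_distrib_right[symmetric])
  moreover have "real (card J) \<le> 2 ^ K" unfolding J_def by (rule real_card_le_two_pow) auto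
  ultimately have "(1 - subset_weight q K {}) * F - 2 ^ K \<le> (\<Sum>T\<in>J. real (card (part T)))"
    by linarith
  then show ?thesis using F True by (simp add: algebra_simps)
qed

definition cached :: "nat \<Rightarrow> nat set" where
  "cached k = (\<Union>T\<in>{T\<in>Pow {..<K}. k \<in> T}. part T)"

lemma cached_subset: "cached k \<subseteq> {..<F}"
  unfolding cached_def using part_subset by auto

lemma finite_cached: "finite (cached k)"
  using cached_subset finite_subset by blast

lemma real_card_cached_bounds:
  assumes "k < K"
  shows "real (card (cached k)) \<le> q * F" and "q * F - 2 ^ K \<le> real (card (cached k))"
proof -
  define A where "A = {T\<in>Pow {..<K}. k \<in> T}"
  have card: "real (card (cached k)) = (\<Sum>T\<in>A. real (card (part T)))"
    unfolding cached_def A_def by (subst card_UN_part) auto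
  have weight: "(\<Sum>T\<in>A. subset_weight q K T) = q"
    unfolding A_def by (rule sum_subset_weight_mem[OF assms])
  have "(\<Sum>T\<in>A. real (card (part T))) \<le> (\<Sum>T\<in>A. subset_weight q K T * F)"
    using real_card_part_bounds(1) unfolding A_def by (intro sum_mono) auto
  then show "real (card (cached k)) \<le> q * F"
    using card weight by (simp add: sum_distrib_right[symmetric])
  have "(\<Sum>T\<in>A. subset_weight q K T * F - 1) \<le> (\<Sum>T\<in>A. real (card (part T)))"
    using real_card_part_bounds(2) unfolding A_def by (intro sum_mono) auto
  then have "q * F - real (card A) \<le> real (card (cached k))"
    using card weight by (simp add: sum_subtractf sum_distrib_right[symmetric])
  moreover have "real (card A) \<le> 2 ^ K" unfolding A_def by (rule real_card_le_two_pow) auto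
  ultimately show "q * F - 2 ^ K \<le> real (card (cached k))" by linarith
qed

end

section \<open>The caching model\<close>

definition bits_at :: "bool list \<Rightarrow> nat set \<Rightarrow> bool list" where
  "bits_at xs I = tabulate (\<lambda>i. xs ! i) I"

lemma finite_file_tuples: "finite (file_tuples N F)"
  unfolding file_tuples_def by (intro finite_PiE) (auto simp: finite_bool_lists)

lemma file_tuples_nonempty: "file_tuples N F \<noteq> {}"
  unfolding file_tuples_def by (auto simp: PiE_eq_empty_iff intro: exI[of _ "replicate F False"])

lemma length_file_tuple: "W \<in> file_tuples N F \<Longrightarrow> n < N \<Longrightarrow> length (W n) = F"
  unfolding file_tuples_def by (auto simp: PiE_iff)

lemma demand_less: "d \<in> demand_vectors N K \<Longrightarrow> k < K \<Longrightarrow> d k < N"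
  unfolding demand_vectors_def by (auto simp: PiE_iff)

lemma demand_prob_nonneg:
  "\<forall>n<N. p n \<ge> 0 \<Longrightarrow> d \<in> demand_vectors N K \<Longrightarrow> demand_prob p K d \<ge> 0"
  unfolding demand_prob_def by (auto intro!: prod_nonneg dest: demand_less)

lemma achievable_nonneg:
  assumes "\<forall>n<N. p n \<ge> 0" and "achievable p M N K r"
  shows "r \<ge> 0"
proof (rule ccontr)
  assume "\<not> r \<ge> 0"
  then obtain F0 where "\<forall>F\<ge>F0. \<exists>S. expected_rate p N K F S \<le> r + - r / 2"
    using assms(2) unfolding achievable_def by (metis half_gt_zero neg_0_less_iff_less not_le)
  then obtain S where S: "expected_rate p N K F0 S \<le> r / 2" by auto
  have "expected_rate p N K F0 S \<ge> 0"
    unfolding expected_rate_def using demand_prob_nonneg[OF assms(1)] by (auto intro!: sum_nonneg)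
  then show False using S \<open>\<not> r \<ge> 0\<close> by linarith
qed

lemma Rfun_nonneg:
  assumes "0 \<le> M"
  shows "0 \<le> Rfun M N K"
proof (cases "0 < M \<and> M \<le> real N")
  case True
  then have "0 \<le> 1 - M / real N" "1 - M / real N \<le> 1" by (auto simp: field_simps)
  then have "0 \<le> real N / M * (1 - (1 - M / real N) ^ K)"
    using True by (simp add: power_le_one)
  then show ?thesis using True \<open>0 \<le> 1 - M / real N\<close> unfolding Rfun_def by simp
qed (use assms in \<open>auto simp: Rfun_def\<close>)

lemma exp_R_class_nonneg:
  "\<forall>n<N. p n \<ge> 0 \<Longrightarrow> Ml \<ge> 0 \<Longrightarrow> exp_R_class p N K A Ml \<ge> 0"
  unfolding exp_R_class_def
  by (intro sum_nonneg mult_nonneg_nonneg demand_prob_nonneg Rfun_nonneg) auto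

lemma Rfun_ge_coded_rate:
  assumes "0 < M" "0 < N"
  defines "q \<equiv> min (M / real N) 1"
  shows "(1 - q) * min ((1 - (1 - q) ^ K) / q) (real N) \<le> Rfun M N K"
proof (cases "M > real N")
  case True
  then have "q = 1" using assms(2) unfolding q_def by (simp add: min_def field_simps)
  then show ?thesis using Rfun_nonneg[of M N K] assms(1) by simp
next
  case False
  then have "q = M / real N" using assms(2) unfolding q_def by (simp add: min_def field_simps)
  then show ?thesis using assms False unfolding Rfun_def by (simp add: mult.commute)
qed

section \<open>The scheme for a partition of the files into classes\<close>

locale class_partition =
  fixes N K L :: nat and P :: "nat \<Rightarrow> nat set" and Ms :: "nat \<Rightarrow> real"
  assumes classes_nonempty: "\<forall>l<L. P l \<noteq> {}"
    and classes_disjoint: "\<forall>l<L. \<forall>l'<L. l \<noteq> l' \<longrightarrow> P l \<inter> P l' = {}"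
    and classes_cover: "(\<Union>l<L. P l) = {..<N}"
    and cache_shares_nonneg: "\<forall>l<L. Ms l \<ge> 0"
begin

lemma class_subset: "l < L \<Longrightarrow> P l \<subseteq> {..<N}"
  using classes_cover by blast

lemma finite_class: "l < L \<Longrightarrow> finite (P l)"
  using class_subset finite_subset by blast

lemma card_class_pos: "l < L \<Longrightarrow> 0 < card (P l)"
  using finite_class classes_nonempty by (simp add: card_gt_0_iff)

definition class_of :: "nat \<Rightarrow> nat" where
  "class_of n = (THE l. l < L \<and> n \<in> P l)"

lemma class_of_eq: "l < L \<Longrightarrow> n \<in> P l \<Longrightarrow> class_of n = l"
  unfolding class_of_def using classes_disjoint by (intro the_equality) blast+

lemma class_of_mem: "n < N \<Longrightarrow> class_of n < L \<and> n \<in> P (class_of n)"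
  using classes_cover class_of_eq by blast

definition cache_fraction :: "nat \<Rightarrow> real" where
  "cache_fraction l = min (Ms l / card (P l)) 1"

lemma cache_fraction_bounds:
  assumes "l < L"
  shows "0 \<le> cache_fraction l" "cache_fraction l \<le> 1" "card (P l) * cache_fraction l \<le> Ms l"
proof -
  have c: "real (card (P l)) > 0" using card_class_pos[OF assms] by simp
  show "0 \<le> cache_fraction l" "cache_fraction l \<le> 1"
    unfolding cache_fraction_def using cache_shares_nonneg assms c by auto
  have "card (P l) * cache_fraction l \<le> card (P l) * (Ms l / card (P l))"
    unfolding cache_fraction_def using c by (intro mult_left_mono) auto
  then show "card (P l) * cache_fraction l \<le> Ms l" using c by simp
qed

text \<open>A bound, independent of the file size, on the rounding losses of the subpacketization
  and the extra bits of the colouring, per class.\<close>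
definition overhead :: real where
  "overhead = 2 ^ K * (2 ^ K + real K + 1) + real N * 2 ^ K + real K + 1"

lemma Rfun_ge_coded_rate_class:
  assumes "l < L" "cache_fraction l \<noteq> 0"
  shows "(1 - cache_fraction l) * min ((1 - (1 - cache_fraction l) ^ K') / cache_fraction l) (card (P l))
    \<le> Rfun (Ms l) (card (P l)) K'"
proof -
  have "Ms l \<noteq> 0" using assms(2) unfolding cache_fraction_def by auto
  then have "0 < Ms l" using cache_shares_nonneg assms(1) by force
  then show ?thesis
    using Rfun_ge_coded_rate card_class_pos[OF assms(1)] unfolding cache_fraction_def by blast
qed

lemma Rfun_class_no_cache:
  "l < L \<Longrightarrow> cache_fraction l = 0 \<Longrightarrow> Rfun (Ms l) (card (P l)) K' = min (card (P l)) K'"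
  using card_class_pos[of l] unfolding cache_fraction_def Rfun_def
  by (auto simp: min_def split: if_splits)

end

text \<open>Coded caching within each class \<open>l\<close> with the file size \<open>F\<close> and the cache fraction
  \<open>q = min (M\<^sub>l/N\<^sub>l) 1\<close>.  For a demand vector \<open>d\<close> let \<open>S\<close> be the users requesting a file of the
  class.  If \<open>N\<^sub>l \<le> (1 - (1 - q)\<^bsup>|S|\<^esup>)/q\<close> the server describes the requested files
  (block \<open>(l, None)\<close>), otherwise it sends one block \<open>(l, Some V)\<close> for every set of users \<open>V\<close>
  meeting \<open>S\<close>, from which each \<open>i \<in> V \<inter> S\<close> learns the part \<open>V - {i}\<close> of its file, knowing the
  parts for the other users in \<open>V\<close> from its cache.\<close>
locale coded_delivery = class_partition +
  fixes F :: nat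
begin

definition part :: "nat \<Rightarrow> nat set \<Rightarrow> nat set" where
  "part l = (SOME I. subpacketization K F (cache_fraction l) I)"

lemma subpacketization_part: "l < L \<Longrightarrow> subpacketization K F (cache_fraction l) (part l)"
  unfolding part_def using subpacketization_exists cache_fraction_bounds by (metis someI_ex)

abbreviation cached :: "nat \<Rightarrow> nat \<Rightarrow> nat set" where
  "cached l \<equiv> subpacketization.cached K (part l)"

lemma cached_eq: "l < L \<Longrightarrow> cached l k = (\<Union>T\<in>{T\<in>Pow {..<K}. k \<in> T}. part l T)"
  using subpacketization.cached_def[OF subpacketization_part] by blast

lemma finite_cached: "l < L \<Longrightarrow> finite (cached l k)"
  using subpacketization.finite_cached[OF subpacketization_part] .

lemma cached_subset: "l < L \<Longrightarrow> cached l k \<subseteq> {..<F}"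
  using subpacketization.cached_subset[OF subpacketization_part] .

lemma finite_part: "l < L \<Longrightarrow> T \<subseteq> {..<K} \<Longrightarrow> finite (part l T)"
  using subpacketization.finite_part[OF subpacketization_part] .

definition requesters :: "(nat \<Rightarrow> nat) \<Rightarrow> nat \<Rightarrow> nat set" where
  "requesters d l = {k\<in>{..<K}. d k \<in> P l}"

definition requested :: "(nat \<Rightarrow> nat) \<Rightarrow> nat \<Rightarrow> nat set" where
  "requested d l = d ` requesters d l"

definition uncoded :: "(nat \<Rightarrow> nat) \<Rightarrow> nat \<Rightarrow> bool" where
  "uncoded d l \<longleftrightarrow> cache_fraction l = 0 \<or>
     card (P l) \<le> (1 - (1 - cache_fraction l) ^ card (requesters d l)) / cache_fraction l"

definition coded_groups :: "(nat \<Rightarrow> nat) \<Rightarrow> nat \<Rightarrow> nat set set" where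
  "coded_groups d l = {V\<in>Pow {..<K}. V \<inter> requesters d l \<noteq> {}}"

definition blocks :: "(nat \<Rightarrow> nat) \<Rightarrow> (nat \<times> nat set option) set" where
  "blocks d = (SIGMA l:{..<L}. if uncoded d l then {None} else Some ` coded_groups d l)"

fun block_view :: "(nat \<Rightarrow> nat) \<Rightarrow> nat \<times> nat set option \<Rightarrow> (nat \<Rightarrow> bool list) \<Rightarrow> nat \<Rightarrow> bool list"
  where
    "block_view d (l, None) W = (\<lambda>n. if n \<in> requested d l then W n else [])"
  | "block_view d (l, Some V) W =
       (\<lambda>i. if i \<in> V \<inter> requesters d l then bits_at (W (d i)) (part l (V - {i})) else [])"

fun confusable :: "(nat \<Rightarrow> nat) \<Rightarrow> nat \<times> nat set option \<Rightarrow> (nat \<Rightarrow> bool list) \<Rightarrow> (nat \<Rightarrow> bool list) \<Rightarrow> bool"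
  where
    "confusable d (l, None) y y' \<longleftrightarrow> (\<exists>k\<in>requesters d l. y (d k) \<noteq> y' (d k) \<and>
       (\<forall>n\<in>requested d l. \<forall>j\<in>cached l k. y n ! j = y' n ! j))"
  | "confusable d (l, Some V) y y' \<longleftrightarrow> (\<exists>k\<in>V \<inter> requesters d l. y k \<noteq> y' k \<and>
       (\<forall>i\<in>V \<inter> requesters d l - {k}. y i = y' i))"

lemma confusable_sym:
  assumes "confusable d b y y'"
  shows "confusable d b y' y"
proof -
  obtain l ov where "b = (l, ov)" by fastforce
  then show ?thesis using assms by (cases ov) (simp_all, metis+)
qed

lemma confusable_irrefl: "\<not> confusable d b y y"
  by (metis confusable.simps not_Some_eq surj_pair)

definition uncached_max :: "nat \<Rightarrow> nat" where
  "uncached_max l = Max (insert 0 ((\<lambda>k. F - card (cached l k)) ` {..<K}))"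

definition coded_piece_max :: "(nat \<Rightarrow> nat) \<Rightarrow> nat \<Rightarrow> nat set \<Rightarrow> nat" where
  "coded_piece_max d l V = Max (insert 0 ((\<lambda>i. card (part l (V - {i}))) ` (V \<inter> requesters d l)))"

text \<open>The \<open>K + 1\<close> extra bits pay for the union bound over the users in the colouring argument.\<close>
fun block_width :: "(nat \<Rightarrow> nat) \<Rightarrow> nat \<times> nat set option \<Rightarrow> nat" where
  "block_width d (l, None) = card (requested d l) * uncached_max l + K + 1"
| "block_width d (l, Some V) = coded_piece_max d l V + K + 1"

lemma requesters_subset: "requesters d l \<subseteq> {..<K}"
  unfolding requesters_def by auto

lemma card_requesters_le: "card (requesters d l) \<le> K"
  using card_mono[OF _ requesters_subset] by fastforce

lemma requested_subset: "requested d l \<subseteq> P l"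
  unfolding requested_def requesters_def by auto

lemma finite_blocks: "finite (blocks d)"
  unfolding blocks_def coded_groups_def by (intro finite_SigmaI) auto


lemma card_uncoded_views_agreeing_le:
  fixes d :: "nat \<Rightarrow> nat" and y :: "nat \<Rightarrow> bool list"
  assumes l: "l < L" and k: "k < K"
  defines "D \<equiv> requested d l"
  shows "card {y'\<in>block_view d (l, None) ` file_tuples N F.
                \<forall>n\<in>D. \<forall>j\<in>cached l k. y' n ! j = y n ! j} \<le> 2 ^ (card D * uncached_max l)"
    (is "card ?A \<le> _")
proof -
  define uncached where "uncached = Sigma D (\<lambda>n. {..<F} - cached l k)"
  have D: "finite D" "D \<subseteq> {..<N}"
    using requested_subset class_subset[OF l] unfolding D_def requested_def requesters_def by auto
  have fin: "finite uncached" unfolding uncached_def using D by auto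
  have "inj_on (\<lambda>y'. tabulate (\<lambda>(n,j). y' n ! j) uncached) ?A"
  proof (rule inj_onI)
    fix y1 y2 assume y1: "y1 \<in> ?A" and y2: "y2 \<in> ?A"
      and "tabulate (\<lambda>(n,j). y1 n ! j) uncached = tabulate (\<lambda>(n,j). y2 n ! j) uncached"
    then have uncached_eq: "\<forall>(n,j)\<in>uncached. y1 n ! j = y2 n ! j"
      unfolding tabulate_eq_iff[OF fin] by auto
    have "y1 n = y2 n" for n
    proof (cases "n \<in> D")
      case True
      then have len: "length (y1 n) = F" "length (y2 n) = F"
        using y1 y2 D length_file_tuple unfolding D_def by auto
      show ?thesis
      proof (rule nth_equalityI)
        fix j assume "j < length (y1 n)"
        then have "j < F" using len by simp
        show "y1 n ! j = y2 n ! j"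
        proof (cases "j \<in> cached l k")
          case True
          then show ?thesis using y1 y2 \<open>n \<in> D\<close> by auto
        next
          case False
          then show ?thesis using uncached_eq \<open>n \<in> D\<close> \<open>j < F\<close> unfolding uncached_def by auto
        qed
      qed (use len in simp)
    qed (use y1 y2 in \<open>auto simp: D_def\<close>)
    then show "y1 = y2" ..
  qed
  then have "card ?A \<le> 2 ^ card uncached"
    by (rule card_le_pow_if_inj_on_bool_lists) (auto simp: length_tabulate[OF fin])
  also have "card uncached = card D * (F - card (cached l k))"
    using card_Diff_subset[OF finite_cached[OF l] cached_subset[OF l]]
    unfolding uncached_def by (simp add: card_SigmaI[OF D(1)])
  also have "F - card (cached l k) \<le> uncached_max l"
    unfolding uncached_max_def using k by (intro Max_ge) auto
  finally show ?thesis by (simp add: order_trans)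
qed

lemma degree_uncoded_block:
  fixes d :: "nat \<Rightarrow> nat"
  assumes l: "l < L" and W: "W \<in> file_tuples N F"
  defines "b \<equiv> (l, None)" and "Y \<equiv> block_view d (l, None) ` file_tuples N F"
  shows "card {y'\<in>Y. confusable d b (block_view d b W) y'} < 2 ^ block_width d b"
proof -
  let ?y = "block_view d b W" and ?D = "requested d l"
  define A where "A k = {y'\<in>Y. \<forall>n\<in>?D. \<forall>j\<in>cached l k. y' n ! j = ?y n ! j}" for k
  have "card {y'\<in>Y. confusable d b ?y y'} < 2 ^ (card ?D * uncached_max l + K + 1)"
  proof (rule card_related_lt_two_pow)
    show "{y'\<in>Y. confusable d b ?y y'} \<subseteq> (\<Union>k\<in>requesters d l. A k)"
      unfolding A_def b_def by fastforce
    show "card (A k) \<le> 2 ^ (card ?D * uncached_max l)" if "k \<in> requesters d l" for k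
      using card_uncoded_views_agreeing_le[OF l, of k d "?y"] that
      unfolding A_def Y_def b_def requesters_def by simp
  qed (auto simp: A_def Y_def card_requesters_le finite_file_tuples
      intro: finite_subset[OF requesters_subset])
  then show ?thesis unfolding b_def by simp
qed

lemma degree_coded_block:
  fixes d :: "nat \<Rightarrow> nat"
  assumes l: "l < L" and V: "V \<subseteq> {..<K}" and W: "W \<in> file_tuples N F"
  defines "b \<equiv> (l, Some V)" and "Y \<equiv> block_view d (l, Some V) ` file_tuples N F"
  shows "card {y'\<in>Y. confusable d b (block_view d b W) y'} < 2 ^ block_width d b"
proof -
  let ?y = "block_view d b W" and ?S = "V \<inter> requesters d l"
  define A where "A k = {y'\<in>Y. \<forall>i\<in>?S - {k}. y' i = ?y i}" for k
  have "card (A k) \<le> 2 ^ coded_piece_max d l V" if k: "k \<in> ?S" for k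
  proof -
    have "inj_on (\<lambda>y'. y' k) (A k)"
    proof (rule inj_onI, rule ext)
      fix y1 y2 i assume "y1 \<in> A k" "y2 \<in> A k" "y1 k = y2 k"
      then show "y1 i = y2 i" by (cases "i \<in> ?S - {k}") (auto simp: A_def Y_def)
    qed
    moreover have "finite (part l (V - {k}))" using finite_part[OF l, of "V - {k}"] V by auto
    ultimately have "card (A k) \<le> 2 ^ card (part l (V - {k}))"
      using k by (intro card_le_pow_if_inj_on_bool_lists) (auto simp: A_def Y_def bits_at_def length_tabulate)
    also have "card (part l (V - {k})) \<le> coded_piece_max d l V"
      unfolding coded_piece_max_def using k finite_subset[OF requesters_subset] by (intro Max_ge) auto
    finally show ?thesis by simp
  qed
  moreover have "{y'\<in>Y. confusable d b ?y y'} \<subseteq> (\<Union>k\<in>?S. A k)"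
  proof
    fix y' assume y': "y' \<in> {y'\<in>Y. confusable d b ?y y'}"
    then obtain k where "k \<in> ?S" "\<forall>i\<in>?S - {k}. ?y i = y' i" unfolding b_def by auto
    then have "y' \<in> A k" using y' unfolding A_def by auto
    then show "y' \<in> (\<Union>k\<in>?S. A k)" using \<open>k \<in> ?S\<close> by blast
  qed
  moreover have "card ?S \<le> K"
    using card_mono[of "requesters d l" ?S] card_requesters_le[of d l]
      finite_subset[OF requesters_subset] by auto
  ultimately have "card {y'\<in>Y. confusable d b ?y y'} < 2 ^ (coded_piece_max d l V + K + 1)"
    by (intro card_related_lt_two_pow[where A = A and S = ?S])
      (auto simp: A_def Y_def finite_file_tuples intro: finite_subset[OF requesters_subset])
  then show ?thesis unfolding b_def by simp
qed

lemma degree_block: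
  assumes "b \<in> blocks d" and "y \<in> block_view d b ` file_tuples N F"
  shows "card {y'\<in>block_view d b ` file_tuples N F. confusable d b y y'} < 2 ^ block_width d b"
proof -
  obtain W where W: "W \<in> file_tuples N F" "y = block_view d b W" using assms(2) by auto
  obtain l ov where b: "b = (l, ov)" by fastforce
  then have l: "l < L" using assms(1) unfolding blocks_def by auto
  show ?thesis
  proof (cases ov)
    case None
    then show ?thesis using degree_uncoded_block[OF l W(1)] W b by simp
  next
    case (Some V)
    then have "V \<subseteq> {..<K}" using assms(1) b unfolding blocks_def coded_groups_def by (auto split: if_splits)
    then show ?thesis using degree_coded_block[OF l _ W(1)] W b Some by simp
  qed
qed


lemma confusable_uncoded_block:
  assumes l: "l < L" and k: "k \<in> requesters d l" and differ: "W (d k) \<noteq> W' (d k)"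
    and cache_agree: "\<forall>n\<in>P l. \<forall>j\<in>cached l k. W n ! j = W' n ! j"
  shows "confusable d (l, None) (block_view d (l, None) W) (block_view d (l, None) W')"
proof -
  have "d k \<in> requested d l" using k unfolding requested_def by auto
  then show ?thesis
    using k differ cache_agree requested_subset[of d l] by (auto intro!: bexI[of _ k])
qed

lemma confusable_coded_block:
  assumes l: "l < L" and k: "k \<in> requesters d l" and T: "T \<subseteq> {..<K}" "k \<notin> T"
    and differ: "j \<in> part l T" "W (d k) ! j \<noteq> W' (d k) ! j"
    and cache_agree: "\<forall>n\<in>P l. \<forall>j\<in>cached l k. W n ! j = W' n ! j"
  defines "V \<equiv> insert k T"
  shows "confusable d (l, Some V) (block_view d (l, Some V) W) (block_view d (l, Some V) W')"
proof -
  have V: "V \<subseteq> {..<K}" "k \<in> V \<inter> requesters d l" "V - {k} = T"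
    using T k requesters_subset unfolding V_def by auto
  have "bits_at (W (d k)) (part l T) \<noteq> bits_at (W' (d k)) (part l T)"
    using differ unfolding bits_at_def tabulate_eq_iff[OF finite_part[OF l T(1)]] by blast
  moreover have "bits_at (W (d i)) (part l (V - {i})) = bits_at (W' (d i)) (part l (V - {i}))"
    if i: "i \<in> V \<inter> requesters d l - {k}" for i
  proof -
    have "V - {i} \<subseteq> {..<K}" "k \<in> V - {i}" using i V by auto
    then have "part l (V - {i}) \<subseteq> cached l k"
      unfolding cached_eq[OF l] by blast
    moreover have "d i \<in> P l" using i unfolding requesters_def by auto
    ultimately show ?thesis
      using cache_agree V(1) finite_part[OF l, of "V - {i}"]
      unfolding bits_at_def by (subst tabulate_eq_iff) auto
  qed
  ultimately show ?thesis using V by (auto intro!: bexI[of _ k])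
qed

text \<open>For a differing bit of the requested file, the uncoded block, or the coded block for
  \<open>V = T \<union> {k}\<close> where \<open>T\<close> is the part containing the bit, makes the two tuples confusable.\<close>
lemma decoding_correct:
  assumes d: "d \<in> demand_vectors N K" and W: "W \<in> file_tuples N F" "W' \<in> file_tuples N F"
    and k: "k < K"
    and cache_agree: "\<forall>n<N. \<forall>j\<in>cached (class_of n) k. W n ! j = W' n ! j"
    and separated: "\<forall>b\<in>blocks d. \<not> confusable d b (block_view d b W) (block_view d b W')"
  shows "W (d k) = W' (d k)"
proof (rule ccontr)
  assume differ: "W (d k) \<noteq> W' (d k)"
  define l where "l = class_of (d k)"
  have dk: "d k < N" using demand_less[OF d k] .
  then have l: "l < L" "d k \<in> P l" using class_of_mem unfolding l_def by auto
  have kS: "k \<in> requesters d l" using k l unfolding requesters_def by auto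
  have class_agree: "\<forall>n\<in>P l. \<forall>j\<in>cached l k. W n ! j = W' n ! j"
    using cache_agree class_subset[OF l(1)] class_of_eq[OF l(1)] by fastforce
  show False
  proof (cases "uncoded d l")
    case True
    then have "(l, None) \<in> blocks d" using l unfolding blocks_def by auto
    then show False
      using separated confusable_uncoded_block[OF l(1) kS differ class_agree] by blast
  next
    case False
    have "length (W (d k)) = F" "length (W' (d k)) = F" using length_file_tuple W dk by auto
    then obtain j where j: "j < F" "W (d k) ! j \<noteq> W' (d k) ! j"
      using differ by (auto simp: list_eq_iff_nth_eq)
    then obtain T where T: "T \<subseteq> {..<K}" "j \<in> part l T"
      using subpacketization.part_cover[OF subpacketization_part[OF l(1)]] by blast
    have "k \<notin> T"
      using T j(2) class_agree l(2) cached_eq[OF l(1), of k] by blast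
    then have "(l, Some (insert k T)) \<in> blocks d"
      using False l(1) T(1) k kS unfolding blocks_def coded_groups_def by auto
    then show False
      using separated confusable_coded_block[OF l(1) kS T(1) \<open>k \<notin> T\<close> T(2) j(2) class_agree] by blast
  qed
qed

definition cache_content :: "nat \<Rightarrow> (nat \<Rightarrow> bool list) \<Rightarrow> bool list" where
  "cache_content k W = tabulate (\<lambda>(n,j). W n ! j) (SIGMA n:{..<N}. cached (class_of n) k)"

lemma finite_cache_positions: "finite (SIGMA n:{..<N}. cached (class_of n) k)"
  using class_of_mem finite_cached by (intro finite_SigmaI) auto

lemma cache_content_eq_imp:
  assumes "cache_content k W = cache_content k W'" "n < N" "j \<in> cached (class_of n) k"
  shows "W n ! j = W' n ! j"
  using assms unfolding cache_content_def tabulate_eq_iff[OF finite_cache_positions] by auto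

definition separating_message :: "(nat \<Rightarrow> nat) \<Rightarrow> ((nat \<Rightarrow> bool list) \<Rightarrow> bool list) \<Rightarrow> bool" where
  "separating_message d E \<longleftrightarrow>
     (\<forall>W\<in>file_tuples N F. length (E W) = (\<Sum>b\<in>blocks d. block_width d b)) \<and>
     (\<forall>W\<in>file_tuples N F. \<forall>W'\<in>file_tuples N F. E W = E W' \<longrightarrow>
        (\<forall>b\<in>blocks d. \<not> confusable d b (block_view d b W) (block_view d b W')))"

definition message :: "(nat \<Rightarrow> nat) \<Rightarrow> (nat \<Rightarrow> bool list) \<Rightarrow> bool list" where
  "message d = (SOME E. separating_message d E)"

lemma separating_message: "separating_message d (message d)"
proof -
  have "\<exists>E. separating_message d E"
    unfolding separating_message_def
    using finite_file_tuples finite_blocks confusable_sym confusable_irrefl degree_block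
    by (rule separating_encoding_exists)
  then show ?thesis unfolding message_def by (rule someI_ex)
qed

definition decoder :: "nat \<Rightarrow> (nat \<Rightarrow> nat) \<Rightarrow> bool list \<Rightarrow> bool list \<Rightarrow> bool list" where
  "decoder k d m c =
     (SOME w. \<exists>W\<in>file_tuples N F. cache_content k W = c \<and> message d W = m \<and> W (d k) = w)"

definition coded_scheme :: scheme where
  "coded_scheme = \<lparr>cache = cache_content, enc = message, dec = decoder\<rparr>"

lemma decoder_correct:
  assumes d: "d \<in> demand_vectors N K" and W: "W \<in> file_tuples N F" and k: "k < K"
  shows "decoder k d (message d W) (cache_content k W) = W (d k)"
  unfolding decoder_def
proof (rule someI2)
  fix w assume "\<exists>W'\<in>file_tuples N F.
    cache_content k W' = cache_content k W \<and> message d W' = message d W \<and> W' (d k) = w"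
  then obtain W' where W': "W' \<in> file_tuples N F" "cache_content k W' = cache_content k W"
    "message d W' = message d W" "W' (d k) = w" by blast
  have "\<forall>b\<in>blocks d. \<not> confusable d b (block_view d b W') (block_view d b W)"
    using separating_message[of d] W W' unfolding separating_message_def by blast
  then have "W' (d k) = W (d k)"
    using decoding_correct[OF d W'(1) W k] cache_content_eq_imp[OF W'(2)] by blast
  then show "w = W (d k)" using W'(4) by simp
qed (use W in blast)

lemma err_prob_coded_scheme:
  assumes "d \<in> demand_vectors N K"
  shows "err_prob N K F coded_scheme d = 0"
proof -
  have no_error:
    "{W\<in>file_tuples N F. \<exists>k<K. decoder k d (message d W) (cache_content k W) \<noteq> W (d k)} = {}"
    using decoder_correct[OF assms] by auto
  show ?thesis unfolding err_prob_def coded_scheme_def scheme.select_convs no_error by simp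
qed

lemma msg_len_coded_scheme: "msg_len N F coded_scheme d = (\<Sum>b\<in>blocks d. block_width d b)"
proof -
  have "(\<lambda>W. length (message d W)) ` file_tuples N F = {\<Sum>b\<in>blocks d. block_width d b}"
    using separating_message[of d] file_tuples_nonempty[of N F]
    unfolding separating_message_def by auto
  then show ?thesis unfolding msg_len_def coded_scheme_def by simp
qed

lemma cache_ok_coded_scheme:
  assumes "(\<Sum>l<L. Ms l) = M"
  shows "cache_ok M N K F coded_scheme"
  unfolding cache_ok_def
proof (intro allI impI ballI)
  fix k W assume k: "k < K"
  have "length (cache_content k W) = (\<Sum>n<N. card (cached (class_of n) k))"
    unfolding cache_content_def length_tabulate[OF finite_cache_positions]
    using class_of_mem finite_cached by (intro card_SigmaI) auto
  also have "\<dots> = (\<Sum>l<L. \<Sum>n\<in>P l. card (cached (class_of n) k))"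
    unfolding classes_cover[symmetric]
    using finite_class classes_disjoint by (intro sum.UNION_disjoint) auto
  also have "\<dots> = (\<Sum>l<L. card (P l) * card (cached l k))"
    using class_of_eq by (intro sum.cong) auto
  finally have "real (length (cache_content k W)) = (\<Sum>l<L. card (P l) * real (card (cached l k)))"
    by simp
  also have "\<dots> \<le> (\<Sum>l<L. Ms l * F)"
  proof (rule sum_mono)
    fix l assume "l \<in> {..<L}"
    then have l: "l < L" by simp
    have "card (P l) * real (card (cached l k)) \<le> card (P l) * (cache_fraction l * F)"
      using subpacketization.real_card_cached_bounds(1)[OF subpacketization_part[OF l] k]
      by (intro mult_left_mono) auto
    also have "\<dots> \<le> Ms l * F"
      using cache_fraction_bounds(3)[OF l] by (simp add: mult.assoc[symmetric] mult_right_mono)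
    finally show "card (P l) * real (card (cached l k)) \<le> Ms l * F" .
  qed
  also have "\<dots> = M * F" using assms by (simp add: sum_distrib_right[symmetric])
  finally show "real (length (cache coded_scheme k W)) \<le> M * F"
    unfolding coded_scheme_def by simp
qed


lemma real_uncached_max_le:
  assumes l: "l < L"
  shows "real (uncached_max l) \<le> (1 - cache_fraction l) * F + 2 ^ K"
proof -
  have "real v \<le> (1 - cache_fraction l) * F + 2 ^ K"
    if v: "v \<in> insert 0 ((\<lambda>k. F - card (cached l k)) ` {..<K})" for v
  proof (cases "v = 0")
    case True
    then show ?thesis using cache_fraction_bounds(2)[OF l] by simp
  next
    case False
    then obtain k where k: "k < K" "v = F - card (cached l k)" using v by auto
    have "card (cached l k) \<le> F" using card_mono[OF _ cached_subset[OF l]] by simp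
    then show ?thesis
      using k subpacketization.real_card_cached_bounds(2)[OF subpacketization_part[OF l] k(1)]
      by (simp add: of_nat_diff algebra_simps)
  qed
  moreover have "uncached_max l \<in> insert 0 ((\<lambda>k. F - card (cached l k)) ` {..<K})"
    unfolding uncached_max_def by (intro Max_in) auto
  ultimately show ?thesis .
qed

lemma real_coded_piece_max_le:
  assumes l: "l < L" and V: "V \<subseteq> {..<K}" and q: "cache_fraction l \<noteq> 0"
  shows "real (coded_piece_max d l V)
    \<le> subset_weight (cache_fraction l) K V * ((1 - cache_fraction l) / cache_fraction l * F) + 2 ^ K"
proof -
  let ?q = "cache_fraction l"
  have "0 \<le> subset_weight ?q K V * ((1 - ?q) / ?q * F)"
    using subset_weight_nonneg cache_fraction_bounds[OF l] by simp
  moreover have "real (card (part l (V - {i}))) \<le> subset_weight ?q K V * ((1 - ?q) / ?q * F) + 2 ^ K"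
    if "i \<in> V" for i
    using subpacketization.real_card_part_le[OF subpacketization_part[OF l], of "V - {i}"]
      subset_weight_remove[OF V that q] V by (auto simp: mult.assoc)
  moreover have "coded_piece_max d l V \<in> insert 0 ((\<lambda>i. card (part l (V - {i}))) ` (V \<inter> requesters d l))"
    unfolding coded_piece_max_def using finite_subset[OF requesters_subset] by (intro Max_in) auto
  ultimately show ?thesis by force
qed

lemma sum_subset_weight_coded_groups:
  "(\<Sum>V\<in>coded_groups d l. subset_weight q K V) = 1 - (1 - q) ^ card (requesters d l)"
proof -
  let ?A = "coded_groups d l" and ?B = "{V\<in>Pow {..<K}. V \<inter> requesters d l = {}}"
  have "?A \<union> ?B = Pow {..<K}" unfolding coded_groups_def by blast
  then have "1 = (\<Sum>V\<in>?A \<union> ?B. subset_weight q K V)" by (simp only: sum_subset_weight)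
  also have "\<dots> = (\<Sum>V\<in>?A. subset_weight q K V) + (\<Sum>V\<in>?B. subset_weight q K V)"
    by (rule sum.union_disjoint) (auto simp: coded_groups_def)
  finally show ?thesis using sum_subset_weight_disjoint[OF requesters_subset[of d l], of q] by simp
qed

abbreviation class_blocks :: "(nat \<Rightarrow> nat) \<Rightarrow> nat \<Rightarrow> nat set option set" where
  "class_blocks d l \<equiv> if uncoded d l then {None} else Some ` coded_groups d l"

lemma uncoded_block_width_le:
  assumes l: "l < L" and "uncoded d l"
  shows "real (block_width d (l, None)) \<le> Rfun (Ms l) (card (P l)) (card (requesters d l)) * F + overhead"
proof -
  let ?q = "cache_fraction l" and ?D = "requested d l" and ?K' = "card (requesters d l)"
  have D: "card ?D \<le> card (P l)" "card ?D \<le> ?K'" "card (P l) \<le> N"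
    using card_mono[OF finite_class[OF l] requested_subset] card_mono[OF _ class_subset[OF l]]
      card_image_le[OF finite_subset[OF requesters_subset]]
    unfolding requested_def by auto
  have "real (card ?D) * (1 - ?q) \<le> Rfun (Ms l) (card (P l)) ?K'"
  proof (cases "?q = 0")
    case True
    then show ?thesis using Rfun_class_no_cache[OF l] D by simp
  next
    case False
    then have "min ((1 - (1 - ?q) ^ ?K') / ?q) (card (P l)) = card (P l)"
      using assms(2) unfolding uncoded_def by simp
    then show ?thesis
      using Rfun_ge_coded_rate_class[OF l False, of ?K'] D(1) cache_fraction_bounds(2)[OF l]
      by (smt (verit) mult.commute mult_right_mono of_nat_mono)
  qed
  then have "real (card ?D) * ((1 - ?q) * F) \<le> Rfun (Ms l) (card (P l)) ?K' * F"
    unfolding mult.assoc[symmetric] by (rule mult_right_mono) simp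
  moreover have "real (card ?D) * 2 ^ K \<le> real N * 2 ^ K"
    using D by (intro mult_right_mono) auto
  moreover have "real (card ?D) * real (uncached_max l) \<le> real (card ?D) * ((1 - ?q) * F + 2 ^ K)"
    using real_uncached_max_le[OF l] by (rule mult_left_mono) simp
  moreover have "(0::real) \<le> 2 ^ K * (2 ^ K + real K + 1)" by simp
  ultimately show ?thesis
    unfolding overhead_def block_width.simps of_nat_add of_nat_mult distrib_left by linarith
qed

lemma coded_block_widths_le:
  assumes l: "l < L" and "\<not> uncoded d l"
  shows "real (\<Sum>V\<in>coded_groups d l. block_width d (l, Some V))
    \<le> Rfun (Ms l) (card (P l)) (card (requesters d l)) * F + overhead"
proof -
  let ?q = "cache_fraction l" and ?K' = "card (requesters d l)"
  have q: "?q \<noteq> 0" "(1 - (1 - ?q) ^ ?K') / ?q < card (P l)"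
    using assms(2) unfolding uncoded_def by auto
  have "real (\<Sum>V\<in>coded_groups d l. block_width d (l, Some V))
      = (\<Sum>V\<in>coded_groups d l. real (coded_piece_max d l V) + real (K + 1))"
    by (simp add: ac_simps)
  also have "\<dots> \<le> (\<Sum>V\<in>coded_groups d l.
      subset_weight ?q K V * ((1 - ?q) / ?q * F) + real (2 ^ K + K + 1))"
    using real_coded_piece_max_le[OF l _ q(1)] unfolding coded_groups_def
    by (intro sum_mono) force
  also have "\<dots> = (\<Sum>V\<in>coded_groups d l. subset_weight ?q K V) * ((1 - ?q) / ?q * F)
      + card (coded_groups d l) * real (2 ^ K + K + 1)"
    by (simp only: sum.distrib sum_distrib_right[symmetric] sum_constant of_nat_id)
  also have "\<dots> = (1 - ?q) * ((1 - (1 - ?q) ^ ?K') / ?q) * F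
      + card (coded_groups d l) * real (2 ^ K + K + 1)"
    unfolding sum_subset_weight_coded_groups by simp
  also have "\<dots> \<le> Rfun (Ms l) (card (P l)) ?K' * F + 2 ^ K * real (2 ^ K + K + 1)"
  proof (rule add_mono)
    show "(1 - ?q) * ((1 - (1 - ?q) ^ ?K') / ?q) * F \<le> Rfun (Ms l) (card (P l)) ?K' * F"
      using Rfun_ge_coded_rate_class[OF l q(1), of ?K'] q(2) by (intro mult_right_mono) auto
    show "card (coded_groups d l) * real (2 ^ K + K + 1) \<le> 2 ^ K * real (2 ^ K + K + 1)"
      by (intro mult_right_mono real_card_le_two_pow) (auto simp: coded_groups_def)
  qed
  also have "\<dots> \<le> Rfun (Ms l) (card (P l)) ?K' * F + overhead"
    unfolding overhead_def by (simp add: algebra_simps)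
  finally show ?thesis .
qed

lemma real_msg_len_le:
  "real (msg_len N F coded_scheme d) \<le> (\<Sum>l<L. Rfun (Ms l) (card (P l)) (card (requesters d l)) * F + overhead)"
proof -
  have "msg_len N F coded_scheme d = (\<Sum>(l, ov)\<in>blocks d. block_width d (l, ov))"
    unfolding msg_len_coded_scheme by simp
  also have "\<dots> = (\<Sum>l<L. \<Sum>ov\<in>class_blocks d l. block_width d (l, ov))"
    unfolding blocks_def by (rule sum.Sigma[symmetric]) (auto simp: coded_groups_def)
  finally have "real (msg_len N F coded_scheme d)
      = (\<Sum>l<L. real (\<Sum>ov\<in>class_blocks d l. block_width d (l, ov)))"
    by simp
  also have "\<dots> \<le> (\<Sum>l<L. Rfun (Ms l) (card (P l)) (card (requesters d l)) * F + overhead)"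
  proof (rule sum_mono)
    fix l assume "l \<in> {..<L}"
    then show "real (\<Sum>ov\<in>class_blocks d l. block_width d (l, ov))
        \<le> Rfun (Ms l) (card (P l)) (card (requesters d l)) * F + overhead"
      using uncoded_block_width_le coded_block_widths_le by (cases "uncoded d l") (simp_all add: sum.reindex)
  qed
  finally show ?thesis .
qed

lemma expected_rate_coded_scheme_le:
  assumes p: "\<forall>n<N. p n \<ge> 0" and F: "F > 0"
  shows "expected_rate p N K F coded_scheme \<le> (\<Sum>l<L. exp_R_class p N K (P l) (Ms l))
            + L * overhead / F * (\<Sum>d\<in>demand_vectors N K. demand_prob p K d)"
proof -
  define R where "R d = (\<Sum>l<L. Rfun (Ms l) (card (P l)) (card (requesters d l)))" for d
  define c where "c = L * overhead / F"
  have "real (msg_len N F coded_scheme d) / F \<le> R d + c" for d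
    using real_msg_len_le[of d] F
    by (simp add: R_def c_def sum.distrib sum_distrib_left sum_distrib_right field_simps)
  then have "expected_rate p N K F coded_scheme
      \<le> (\<Sum>d\<in>demand_vectors N K. demand_prob p K d * (R d + c))"
    unfolding expected_rate_def
    by (intro sum_mono mult_left_mono demand_prob_nonneg[OF p])
  also have "\<dots> = (\<Sum>d\<in>demand_vectors N K. demand_prob p K d * R d)
      + c * (\<Sum>d\<in>demand_vectors N K. demand_prob p K d)"
    by (simp add: distrib_left sum.distrib sum_distrib_left mult.commute)
  also have "(\<Sum>d\<in>demand_vectors N K. demand_prob p K d * R d) = (\<Sum>l<L. exp_R_class p N K (P l) (Ms l))"
    unfolding R_def exp_R_class_def requesters_def by (simp add: sum_distrib_left sum.swap[of _ "{..<L}"])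
  finally show ?thesis unfolding c_def .
qed

end

section \<open>Achievability\<close>

lemma (in class_partition) achievable_sum_exp_R_class:
  assumes p: "\<forall>n<N. p n \<ge> 0" and M: "(\<Sum>l<L. Ms l) = M"
  shows "achievable p M N K (\<Sum>l<L. exp_R_class p N K (P l) (Ms l))"
  unfolding achievable_def
proof (intro allI impI)
  fix \<epsilon> :: real assume "\<epsilon> > 0"
  define Z where "Z = (\<Sum>d\<in>demand_vectors N K. demand_prob p K d)"
  define c where "c = L * overhead * Z"
  define F0 where "F0 = nat \<lceil>c / \<epsilon>\<rceil> + 1"
  show "\<exists>F0. \<forall>F\<ge>F0. \<exists>S. cache_ok M N K F S \<and> (\<forall>d\<in>demand_vectors N K. err_prob N K F S d \<le> \<epsilon>)
      \<and> expected_rate p N K F S \<le> (\<Sum>l<L. exp_R_class p N K (P l) (Ms l)) + \<epsilon>"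
  proof (intro exI[of _ F0] allI impI)
    fix F assume "F0 \<le> F"
    then have "F > 0" "c / \<epsilon> \<le> F" unfolding F0_def by linarith+
    then have "c / F \<le> \<epsilon>" using \<open>\<epsilon> > 0\<close> by (simp add: field_simps)
    interpret coded_delivery N K L P Ms F ..
    have "expected_rate p N K F coded_scheme \<le> (\<Sum>l<L. exp_R_class p N K (P l) (Ms l)) + c / F"
      using expected_rate_coded_scheme_le[OF p \<open>F > 0\<close>] unfolding c_def Z_def by simp
    then show "\<exists>S. cache_ok M N K F S \<and> (\<forall>d\<in>demand_vectors N K. err_prob N K F S d \<le> \<epsilon>)
      \<and> expected_rate p N K F S \<le> (\<Sum>l<L. exp_R_class p N K (P l) (Ms l)) + \<epsilon>"
      using cache_ok_coded_scheme[OF M] err_prob_coded_scheme \<open>\<epsilon> > 0\<close> \<open>c / F \<le> \<epsilon>\<close>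
      by (intro exI[of _ coded_scheme]) auto
  qed
qed

theorem theorem1:
  fixes N K L :: nat and M :: real and p :: "nat \<Rightarrow> real" and P :: "nat \<Rightarrow> nat set"
  assumes "N \<ge> 1"
    and "M \<ge> 0"
    and "\<forall>n<N. p n \<ge> 0" and "(\<Sum>n<N. p n) = 1"
    and "\<forall>l<L. P l \<noteq> {}"
    and "\<forall>l<L. \<forall>l'<L. l \<noteq> l' \<longrightarrow> P l \<inter> P l' = {}"
    and "(\<Union>l<L. P l) = {..<N}"
  shows "R_star p M N K
           \<le> Inf ((\<lambda>Ms. \<Sum>l<L. exp_R_class p N K (P l) (Ms l))
                   ` {Ms. (\<forall>l<L. Ms l \<ge> 0) \<and> (\<Sum>l<L. Ms l) = M})
       \<and> Inf ((\<lambda>Ms. \<Sum>l<L. exp_R_class p N K (P l) (Ms l))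
                   ` {Ms. (\<forall>l<L. Ms l \<ge> 0) \<and> (\<Sum>l<L. Ms l) = M})
           \<le> (\<Sum>l<L. exp_R_class p N K (P l) (M / real L))"
proof -
  define splits where "splits = {Ms. (\<forall>l<L. Ms l \<ge> 0) \<and> (\<Sum>l<L. Ms l) = M}"
  define f where "f Ms = (\<Sum>l<L. exp_R_class p N K (P l) (Ms l))" for Ms :: "nat \<Rightarrow> real"
  have "0 \<in> (\<Union>l<L. P l)" using assms(1,7) by simp
  then have "L > 0" by auto
  then have equal_split: "(\<lambda>_. M / L) \<in> splits" unfolding splits_def using assms(2) by simp
  have "bdd_below (f ` splits)"
    using exp_R_class_nonneg[OF assms(3)] unfolding f_def splits_def
    by (intro bdd_belowI[of _ 0]) (auto intro!: sum_nonneg)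
  then have "Inf (f ` splits) \<le> f (\<lambda>_. M / L)" using equal_split by (intro cInf_lower) auto
  moreover have "R_star p M N K \<le> f Ms" if "Ms \<in> splits" for Ms
  proof -
    interpret class_partition N K L P Ms
      using assms(5-7) that unfolding splits_def by unfold_locales auto
    have "achievable p M N K (f Ms)"
      using achievable_sum_exp_R_class[OF assms(3)] that unfolding f_def splits_def by simp
    then show ?thesis unfolding R_star_def using achievable_nonneg[OF assms(3)]
      by (intro cInf_lower bdd_belowI[of _ 0]) auto
  qed
  then have "R_star p M N K \<le> Inf (f ` splits)" using equal_split by (intro cInf_greatest) auto
  ultimately show ?thesis unfolding f_def splits_def by simp
qed

end
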